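(* There exists no valid epistemic state that can be used to reach a logical contradiction in the Frauchiger-Renner setting in the toy theory.
   Context: Setting: Spekkens' toy theory in its general (stabilizer/quadrature) formulation, for systems of discrete dimension d (ontic states in $\mathbb{Z}_d^{2n}$) or continuous systems (ontic states in $\mathbb{R}^{2n}$). A valid epistemic state is a pair $(V,\vec v)$, where $V$ is a subspace/submodule of known quadrature observables that pairwise commute under the Poisson bracket $[f,g]=\sum_i f_{2i-1}g_{2i}-f_{2i}g_{2i-1}$, and $\vec v$ is a valuation; the state is the uniform distribution over the ontic states in $V^{\perp}+\vec v$. A measurement is a subspace $V_\pi$ of observables with outcomes $\vec v_\pi$ (outcome $\vec v_\pi$ is obtained iff the ontic state lies in $V_\pi^{\perp}+\vec v_\pi$). After obtaining outcome $\vec v_\pi$ the state is updated to $(V_\pi\oplus V_{\text{commute}},\vec v')$ with $\vec v'\in(V_\pi^{\perp}+\vec v_\pi)\cap(V_{\text{commute}}^{\perp}+\vec v)$, where $V_{\text{commute}}=\{\vec f\in V:[\vec f,\vec f_\pi]=0\ \forall \vec f_\pi\in V_\pi\}$. Frauchiger-Renner setting in the toy theory: four systems $R, A, S, B$ of arbitrary sizes, where $R$ and $S$ are the systems measured by Alice and Bob and $A$, $B$ are Alice's and Bob's memory registers; the global initial ontic state is $\vec o=(\vec o_R,\vec o_A,\vec o_S,\vec o_B)$ and the initial joint epistemic state $(V,\vec v)$ is arbitrary (all relevant correlations are encoded in it, since conditional preparation of non-orthogonal states is not possible in the toy theory). Measurements, in this order: at t=1 Alice measures an arbitrary observable subspace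 $V_A$ supported on $R$, calling outcome $\vec v_{A=1}$ "1"; at t=2 Bob measures an arbitrary $V_B$ supported on $S$, calling outcome $\vec v_{B=1}$ "1"; at t=3 Ursula measures an arbitrary $V_U$ supported on $RA$ (Alice's lab) with two distinct outcomes $\vec v_{U,ok}$, $\vec v_{U,fail}$ ($\vec v_{U,ok}-\vec v_{U,fail}\notin V_U^{\perp}$); at t=4 Wigner measures an arbitrary $V_W$ supported on $SB$ (Bob's lab) with two distinct outcomes $\vec v_{W,ok}$, $\vec v_{W,fail}$ ($\vec v_{W,ok}-\vec v_{W,fail}\notin V_W^{\perp}$). A statement "X = x ⟹ Y = y" means that, after updating the epistemic state on outcome x of X's measurement, outcome y of Y's measurement is predicted with certainty (probability 1). A logical contradiction (as in the quantum Frauchiger-Renner paradox) means: the joint outcome (Ursula = ok, Wigner = ok) has nonzero probability, and the certain inferences "U = ok ⟹ B = 1", "B = 1 ⟹ A = 1", "A = 1 ⟹ W = fail" all hold, giving the chain $(w=\text{ok}\wedge u=\text{ok})\implies b=1\implies a=1\implies w=\text{fail}$. *)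

theory Defs
  imports Complex_Main
begin

text \<open>Scalars: the ring Z_d (any d >= 2) or the reals.\<close>
definition toy_scalars :: "'k::comm_ring_1 itself \<Rightarrow> bool" where
  "toy_scalars _ \<longleftrightarrow>
     (finite (UNIV :: 'k set) \<and> (\<forall>x::'k. \<exists>n::nat. x = of_nat n)) \<or>
     (\<exists>\<phi>::'k \<Rightarrow> real. bij \<phi> \<and> (\<forall>x y. \<phi> (x + y) = \<phi> x + \<phi> y)
                        \<and> (\<forall>x y. \<phi> (x * y) = \<phi> x * \<phi> y) \<and> \<phi> 1 = 1)"

text \<open>Modes (degrees of freedom) are elements of a finite type 'm; each
  mode belongs to one of the four systems and carries two quadratures Q and P.  Ontic states
  and quadrature observables are vectors in 'k^(2n), represented as functions on 'm \<times> quad.\<close>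
datatype sysname = SysR | SysA | SysS | SysB

datatype quad = Q | P

type_synonym ('m, 'k) vec = "'m \<times> quad \<Rightarrow> 'k"

definition vzero :: "('m, 'k::comm_ring_1) vec" where
  "vzero = (\<lambda>j. 0)"

definition vadd :: "('m, 'k::comm_ring_1) vec \<Rightarrow> ('m, 'k) vec \<Rightarrow> ('m, 'k) vec" where
  "vadd x y = (\<lambda>j. x j + y j)"

definition vscale :: "'k::comm_ring_1 \<Rightarrow> ('m, 'k) vec \<Rightarrow> ('m, 'k) vec" where
  "vscale c x = (\<lambda>j. c * x j)"

text \<open>Value of observable f on ontic state m (Euclidean pairing).\<close>
definition dotp :: "('m::finite, 'k::comm_ring_1) vec \<Rightarrow> ('m, 'k) vec \<Rightarrow> 'k" where
  "dotp f x = (\<Sum>j\<in>UNIV. f j * x j)"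

definition pbracket :: "('m::finite, 'k::comm_ring_1) vec \<Rightarrow> ('m, 'k) vec \<Rightarrow> 'k" where
  "pbracket f g = (\<Sum>i\<in>UNIV. f (i, Q) * g (i, P) - f (i, P) * g (i, Q))"

definition submod :: "('m, 'k::comm_ring_1) vec set \<Rightarrow> bool" where
  "submod V \<longleftrightarrow> vzero \<in> V \<and> (\<forall>x\<in>V. \<forall>y\<in>V. vadd x y \<in> V) \<and> (\<forall>c. \<forall>x\<in>V. vscale c x \<in> V)"

definition isotropic :: "('m::finite, 'k::comm_ring_1) vec set \<Rightarrow> bool" where
  "isotropic V \<longleftrightarrow> (\<forall>f\<in>V. \<forall>g\<in>V. pbracket f g = 0)"

definition perp :: "('m::finite, 'k::comm_ring_1) vec set \<Rightarrow> ('m, 'k) vec set" where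
  "perp V = {x. \<forall>f\<in>V. dotp f x = 0}"

definition aff :: "('m::finite, 'k::comm_ring_1) vec set \<Rightarrow> ('m, 'k) vec \<Rightarrow> ('m, 'k) vec set" where
  "aff V v = {vadd x v | x. x \<in> perp V}"

definition sumsp :: "('m, 'k::comm_ring_1) vec set \<Rightarrow> ('m, 'k) vec set \<Rightarrow> ('m, 'k) vec set" where
  "sumsp A B = {vadd a b | a b. a \<in> A \<and> b \<in> B}"

text \<open>A valid epistemic state (V, v): V a subspace of pairwise commuting observables.
  It describes the uniform distribution on aff V v.\<close>
definition valid_state :: "('m::finite, 'k::comm_ring_1) vec set \<Rightarrow> ('m, 'k) vec \<Rightarrow> bool" where
  "valid_state V v \<longleftrightarrow> submod V \<and> isotropic V"

definition valid_meas :: "('m::finite, 'k::comm_ring_1) vec set \<Rightarrow> bool" where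
  "valid_meas V \<longleftrightarrow> submod V \<and> isotropic V"

definition supported_on ::
  "('m \<Rightarrow> sysname) \<Rightarrow> sysname set \<Rightarrow> ('m, 'k::comm_ring_1) vec set \<Rightarrow> bool" where
  "supported_on sys Ss V \<longleftrightarrow> (\<forall>f\<in>V. \<forall>i q. sys i \<notin> Ss \<longrightarrow> f (i, q) = 0)"

text \<open>Outcome vpi of measurement Vpi has nonzero probability in state (V, v).\<close>
definition outcome_possible ::
  "('m::finite, 'k::comm_ring_1) vec set \<Rightarrow> ('m, 'k) vec \<Rightarrow> ('m, 'k) vec set \<Rightarrow> ('m, 'k) vec \<Rightarrow> bool" where
  "outcome_possible V v Vpi vpi \<longleftrightarrow> aff V v \<inter> aff Vpi vpi \<noteq> {}"

text \<open>Outcome vpi of Vpi is obtained with certainty (probability 1) in state (V, v).\<close>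
definition outcome_certain ::
  "('m::finite, 'k::comm_ring_1) vec set \<Rightarrow> ('m, 'k) vec \<Rightarrow> ('m, 'k) vec set \<Rightarrow> ('m, 'k) vec \<Rightarrow> bool" where
  "outcome_certain V v Vpi vpi \<longleftrightarrow> aff V v \<subseteq> aff Vpi vpi"

text \<open>Measurement update rule.\<close>
definition V_commute ::
  "('m::finite, 'k::comm_ring_1) vec set \<Rightarrow> ('m, 'k) vec set \<Rightarrow> ('m, 'k) vec set" where
  "V_commute V Vpi = {f \<in> V. \<forall>g\<in>Vpi. pbracket f g = 0}"

definition upd_space ::
  "('m::finite, 'k::comm_ring_1) vec set \<Rightarrow> ('m, 'k) vec set \<Rightarrow> ('m, 'k) vec set" where
  "upd_space V Vpi = sumsp Vpi (V_commute V Vpi)"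

text \<open>The admissible valuations v' of the updated state.\<close>
definition upd_vals ::
  "('m::finite, 'k::comm_ring_1) vec set \<Rightarrow> ('m, 'k) vec \<Rightarrow> ('m, 'k) vec set \<Rightarrow> ('m, 'k) vec \<Rightarrow> ('m, 'k) vec set" where
  "upd_vals V v Vpi vpi = aff Vpi vpi \<inter> aff (V_commute V Vpi) v"

text \<open>"X = x ==> Y = y" relative to epistemic state (V, v): outcome x of X is possible,
  and after updating on it, outcome y of Y is predicted with certainty.\<close>
definition infers ::
  "('m::finite, 'k::comm_ring_1) vec set \<Rightarrow> ('m, 'k) vec \<Rightarrow>
   ('m, 'k) vec set \<Rightarrow> ('m, 'k) vec \<Rightarrow> ('m, 'k) vec set \<Rightarrow> ('m, 'k) vec \<Rightarrow> bool" where
  "infers V v VX x VY y \<longleftrightarrow> outcome_possible V v VX x \<and>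
     (\<forall>v' \<in> upd_vals V v VX x. outcome_certain (upd_space V VX) v' VY y)"

text \<open>Joint outcome (x of X, y of Y) has nonzero probability: x is possible, and after
  updating on x, y is possible.\<close>
definition joint_possible ::
  "('m::finite, 'k::comm_ring_1) vec set \<Rightarrow> ('m, 'k) vec \<Rightarrow>
   ('m, 'k) vec set \<Rightarrow> ('m, 'k) vec \<Rightarrow> ('m, 'k) vec set \<Rightarrow> ('m, 'k) vec \<Rightarrow> bool" where
  "joint_possible V v VX x VY y \<longleftrightarrow> outcome_possible V v VX x \<and>
     (\<exists>v' \<in> upd_vals V v VX x. outcome_possible (upd_space V VX) v' VY y)"

definition FR_contradiction ::
  "('m::finite, 'k::comm_ring_1) vec set \<Rightarrow> ('m, 'k) vec \<Rightarrow>
   ('m, 'k) vec set \<Rightarrow> ('m, 'k) vec \<Rightarrow>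
   ('m, 'k) vec set \<Rightarrow> ('m, 'k) vec \<Rightarrow>
   ('m, 'k) vec set \<Rightarrow> ('m, 'k) vec \<Rightarrow> ('m, 'k) vec \<Rightarrow>
   ('m, 'k) vec set \<Rightarrow> ('m, 'k) vec \<Rightarrow> ('m, 'k) vec \<Rightarrow> bool" where
  "FR_contradiction V v VA a1 VB b1 VU uok ufail VW wok wfail \<longleftrightarrow>
     joint_possible V v VU uok VW wok \<and>
     infers V v VU uok VB b1 \<and>
     infers V v VB b1 VA a1 \<and>
     infers V v VA a1 VW wfail"

end

theory Submission
  imports Defs
begin

(* Certain inferences are pointwise: every ontic state compatible with the prior knowledge (V, v)
   and with Ursula's "ok" passes through the chain b = 1, a = 1 and ends in Wigner's "fail".
   The joint outcome (ok, ok), however, is realised by an ontic state y that is only compatible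
   with "ok" and with the part V_commute V VU of the prior knowledge surviving Ursula's
   measurement.  Duality gives perp (V_commute V VU) = perp V + J VU, with J the symplectic
   matrix, so y = z + J h with z compatible with (V, v) and "ok" and h in VU: the measurement
   disturbs the ontic state only by a shift generated by Ursula's observables.  Such a shift
   commutes with everything in Bob's lab, so y and z give Wigner the same outcome, ok = fail.
   Duality (perp (perp M) = M for submodules M) holds over Z_d as well as over the reals since
   in both rings every ideal is principal and equal to the double annihilator of a generator. *)

section \<open>Scalar rings\<close>

definition scalar_ideal :: "'k::comm_ring_1 set \<Rightarrow> bool" where
  "scalar_ideal L \<longleftrightarrow> 0 \<in> L \<and> (\<forall>a\<in>L. \<forall>b\<in>L. a + b \<in> L) \<and> (\<forall>r. \<forall>a\<in>L. r * a \<in> L)"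

definition principal_annihilator_ideals :: "'k::comm_ring_1 itself \<Rightarrow> bool" where
  "principal_annihilator_ideals _ \<longleftrightarrow>
     (\<forall>L::'k set. scalar_ideal L \<longrightarrow>
        (\<exists>g. L = range ((*) g) \<and> (\<forall>y. (\<forall>c. c * g = 0 \<longrightarrow> c * y = 0) \<longrightarrow> y \<in> L)))"

lemma principal_annihilator_idealsD:
  assumes "principal_annihilator_ideals TYPE('k::comm_ring_1)" and "scalar_ideal (L :: 'k set)"
  shows "\<exists>g. L = range ((*) g) \<and> (\<forall>y. (\<forall>c. c * g = 0 \<longrightarrow> c * y = 0) \<longrightarrow> y \<in> L)"
  using assms unfolding principal_annihilator_ideals_def by blast

lemma principal_annihilator_ideals_if_invertible:
  assumes inv: "\<And>x::'k::comm_ring_1. x \<noteq> 0 \<Longrightarrow> \<exists>y. x * y = 1"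
  shows "principal_annihilator_ideals TYPE('k)"
  unfolding principal_annihilator_ideals_def
proof (intro allI impI)
  fix L :: "'k set"
  assume L: "scalar_ideal L"
  show "\<exists>g. L = range ((*) g) \<and> (\<forall>y. (\<forall>c. c * g = 0 \<longrightarrow> c * y = 0) \<longrightarrow> y \<in> L)"
  proof (cases "L \<subseteq> {0}")
    case True
    then have "L = range ((*) 0)"
      using L by (auto simp: scalar_ideal_def)
    moreover have "y \<in> L" if "\<forall>c. c * 0 = 0 \<longrightarrow> c * y = 0" for y
      using that[rule_format, of 1] L by (simp add: scalar_ideal_def)
    ultimately show ?thesis
      by blast
  next
    case False
    then obtain u w where "u \<in> L" "u * w = 1"
      using inv by blast
    then have "r * w * u \<in> L" for r
      using L by (simp add: scalar_ideal_def)
    then have "L = range ((*) 1)"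
      using \<open>u * w = 1\<close> by (auto simp: mult.assoc mult.commute[of w])
    then show ?thesis
      by (intro exI[of _ 1]) auto
  qed
qed

lemma invertible_if_ring_iso_real:
  fixes \<phi> :: "'k::comm_ring_1 \<Rightarrow> real" and x :: 'k
  assumes bij: "bij \<phi>" and add: "\<And>x y. \<phi> (x + y) = \<phi> x + \<phi> y"
    and mult: "\<And>x y. \<phi> (x * y) = \<phi> x * \<phi> y" and one: "\<phi> 1 = 1" and "x \<noteq> 0"
  shows "\<exists>y. x * y = 1"
proof -
  have "\<phi> 0 = 0"
    using add[of 0 0] by simp
  then have "\<phi> x \<noteq> 0"
    using \<open>x \<noteq> 0\<close> bij by (metis bij_is_inj injD)
  then have "\<phi> (x * inv \<phi> (1 / \<phi> x)) = \<phi> 1"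
    using bij by (simp add: mult one bij_is_surj surj_f_inv_f)
  then show ?thesis
    using bij by (metis bij_is_inj injD)
qed

lemma ideal_of_finite_cyclic_ring:
  fixes L :: "'k::comm_ring_1 set"
  assumes fin: "finite (UNIV :: 'k set)" and cyc: "\<And>x::'k. \<exists>n. x = of_nat n"
    and L: "scalar_ideal L"
  shows "\<exists>e. e dvd CHAR('k) \<and> L = range ((*) (of_nat e))"
proof -
  define N where "N = {n. n > 0 \<and> (of_nat n :: 'k) \<in> L}"
  have "CHAR('k) \<in> N"
    using finite_imp_CHAR_pos[OF fin] L by (simp add: N_def scalar_ideal_def)
  define e where "e = (LEAST n. n \<in> N)"
  have eN: "e \<in> N"
    unfolding e_def by (rule LeastI) fact
  have dvd: "e dvd n" if "of_nat n \<in> L" for n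
  proof (rule ccontr)
    assume "\<not> e dvd n"
    have "of_nat n + (- of_nat (n div e)) * of_nat e \<in> L"
      using L that eN unfolding N_def scalar_ideal_def by blast
    moreover have "(of_nat n :: 'k) = of_nat (n div e) * of_nat e + of_nat (n mod e)"
      by (metis div_mult_mod_eq of_nat_add of_nat_mult)
    ultimately have "n mod e \<in> N"
      using \<open>\<not> e dvd n\<close> by (simp add: N_def mod_greater_zero_iff_not_dvd)
    then have "e \<le> n mod e"
      unfolding e_def by (rule Least_le)
    moreover have "n mod e < e"
      using eN by (simp add: N_def)
    ultimately show False
      by simp
  qed
  have "L = range ((*) (of_nat e))"
  proof
    show "L \<subseteq> range ((*) (of_nat e))"
    proof
      fix x assume "x \<in> L"
      obtain n where n: "x = of_nat n"
        using cyc by blast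
      then obtain q where "n = e * q"
        using dvd \<open>x \<in> L\<close> by blast
      then show "x \<in> range ((*) (of_nat e))"
        using n by simp
    qed
    show "range ((*) (of_nat e)) \<subseteq> L"
      using L eN by (auto simp: N_def scalar_ideal_def mult.commute)
  qed
  moreover have "e dvd CHAR('k)"
    using dvd L by (simp add: scalar_ideal_def)
  ultimately show ?thesis
    by blast
qed

lemma double_annihilator_of_CHAR_divisor:
  assumes fin: "finite (UNIV :: 'k::comm_ring_1 set)" and cyc: "\<And>x::'k. \<exists>n. x = of_nat n"
    and "e dvd CHAR('k)" and ann: "\<And>c. c * of_nat e = 0 \<Longrightarrow> c * y = 0"
  shows "y \<in> range ((*) (of_nat e :: 'k))"
proof -
  obtain k where ek: "CHAR('k) = e * k"
    using \<open>e dvd CHAR('k)\<close> by blast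
  then have "k > 0"
    using finite_imp_CHAR_pos[OF fin] by (cases k) auto
  have "(of_nat k :: 'k) * of_nat e = 0"
    by (metis ek mult.commute of_nat_CHAR of_nat_mult)
  then have "of_nat k * y = 0"
    by (rule ann)
  moreover obtain m where m: "y = of_nat m"
    using cyc by blast
  ultimately have "e * k dvd k * m"
    by (metis ek of_nat_eq_0_iff_char_dvd of_nat_mult)
  then have "e dvd m"
    using \<open>k > 0\<close> by (simp add: mult.commute[of e])
  then show ?thesis
    using m by auto
qed

lemma principal_annihilator_ideals_if_finite_cyclic:
  assumes fin: "finite (UNIV :: 'k::comm_ring_1 set)" and cyc: "\<And>x::'k. \<exists>n. x = of_nat n"
  shows "principal_annihilator_ideals TYPE('k)"
  unfolding principal_annihilator_ideals_def
proof (intro allI impI)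
  fix L :: "'k set"
  assume "scalar_ideal L"
  then obtain e where "e dvd CHAR('k)" and L: "L = range ((*) (of_nat e))"
    using ideal_of_finite_cyclic_ring[OF fin cyc] by blast
  then show "\<exists>g. L = range ((*) g) \<and> (\<forall>y. (\<forall>c. c * g = 0 \<longrightarrow> c * y = 0) \<longrightarrow> y \<in> L)"
    using double_annihilator_of_CHAR_divisor[OF fin cyc] by blast
qed

lemma toy_scalars_principal_annihilator_ideals:
  assumes "toy_scalars TYPE('k::comm_ring_1)"
  shows "principal_annihilator_ideals TYPE('k)"
  using assms unfolding toy_scalars_def
  by (metis principal_annihilator_ideals_if_finite_cyclic principal_annihilator_ideals_if_invertible
      invertible_if_ring_iso_real)

section \<open>Submodules and their annihilators\<close>

definition dot_on :: "'i set \<Rightarrow> ('i \<Rightarrow> 'k::comm_ring_1) \<Rightarrow> ('i \<Rightarrow> 'k) \<Rightarrow> 'k" where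
  "dot_on I f x = (\<Sum>j\<in>I. f j * x j)"

lemma dot_on_vadd: "dot_on I f (vadd x y) = dot_on I f x + dot_on I f y"
  unfolding dot_on_def vadd_def by (simp add: distrib_left sum.distrib)

lemma dot_on_vscale: "dot_on I f (vscale c x) = c * dot_on I f x"
  unfolding dot_on_def vscale_def by (simp add: sum_distrib_left algebra_simps)

lemma dot_on_insert_fun_upd:
  assumes "finite I" "a \<notin> I"
  shows "dot_on (insert a I) (f(a := c)) x = c * x a + dot_on I f x"
  unfolding dot_on_def using assms by (auto intro: sum.cong)

lemma dot_on_coordinate:
  assumes "finite I" "a \<in> I"
  shows "dot_on I (\<lambda>j. if j = a then c else 0) x = c * x a"
proof -
  have "dot_on I (\<lambda>j. if j = a then c else 0) x = (\<Sum>j\<in>I. if j = a then c * x j else 0)"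
    unfolding dot_on_def by (rule sum.cong) auto
  then show ?thesis
    using assms by simp
qed

lemma submodD:
  assumes "submod M"
  shows "vzero \<in> M" and "x \<in> M \<Longrightarrow> y \<in> M \<Longrightarrow> vadd x y \<in> M" and "x \<in> M \<Longrightarrow> vscale c x \<in> M"
  using assms unfolding submod_def by blast+

lemma scalar_ideal_coordinate:
  assumes M: "submod M"
  shows "scalar_ideal ((\<lambda>m. m a) ` M)"
  unfolding scalar_ideal_def
proof (intro conjI ballI allI)
  show "0 \<in> (\<lambda>m. m a) ` M"
    using submodD(1)[OF M] by (force simp: vzero_def)
  show "p + q \<in> (\<lambda>m. m a) ` M" if "p \<in> (\<lambda>m. m a) ` M" "q \<in> (\<lambda>m. m a) ` M" for p q
    using that submodD(2)[OF M] by (force simp: vadd_def)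
  show "r * p \<in> (\<lambda>m. m a) ` M" if "p \<in> (\<lambda>m. m a) ` M" for r p
    using that submodD(3)[OF M] by (force simp: vscale_def)
qed

lemma submod_coordinate_kernel: "submod M \<Longrightarrow> submod {m \<in> M. m a = 0}"
  unfolding submod_def by (simp add: vzero_def vadd_def vscale_def)

lemma coordinate_attained:
  assumes pai: "principal_annihilator_ideals TYPE('k::comm_ring_1)"
    and M: "submod (M :: ('m, 'k) vec set)" and "finite I" "a \<in> I"
    and ann: "\<And>f. \<forall>m\<in>M. dot_on I f m = 0 \<Longrightarrow> dot_on I f x = 0"
  shows "x a \<in> (\<lambda>m. m a) ` M"
proof -
  obtain g where L: "(\<lambda>m. m a) ` M = range ((*) g)"
    and double_ann: "\<forall>y. (\<forall>c. c * g = 0 \<longrightarrow> c * y = 0) \<longrightarrow> y \<in> (\<lambda>m. m a) ` M"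
    using principal_annihilator_idealsD[OF pai scalar_ideal_coordinate[OF M, of a]] by blast
  show ?thesis
  proof (rule double_ann[rule_format])
    fix c assume "c * g = 0"
    have ann_c: "c * m a = 0" if "m \<in> M" for m
    proof -
      have "m a \<in> range ((*) g)"
        using L \<open>m \<in> M\<close> by blast
      then obtain r where "m a = g * r"
        by blast
      then show ?thesis
        using \<open>c * g = 0\<close> by (simp add: mult.assoc[symmetric])
    qed
    then have "dot_on I (\<lambda>j. if j = a then c else 0) x = 0"
      by (intro ann) (simp add: dot_on_coordinate[OF \<open>finite I\<close> \<open>a \<in> I\<close>] ann_c)
    then show "c * x a = 0"
      by (simp only: dot_on_coordinate[OF \<open>finite I\<close> \<open>a \<in> I\<close>])
  qed
qed

(* Baer's criterion in disguise: the scalars are self-injective. *)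
lemma dot_on_factors_through_coordinate:
  assumes pai: "principal_annihilator_ideals TYPE('k::comm_ring_1)"
    and M: "submod (M :: ('m, 'k) vec set)"
    and kernel: "\<And>m. m \<in> M \<Longrightarrow> m a = 0 \<Longrightarrow> dot_on I f m = 0"
  shows "\<exists>s. \<forall>m\<in>M. dot_on I f m = s * m a"
proof -
  obtain g where L: "(\<lambda>m. m a) ` M = range ((*) g)"
    and double_ann: "\<forall>y. (\<forall>c. c * g = 0 \<longrightarrow> c * y = 0) \<longrightarrow> y \<in> (\<lambda>m. m a) ` M"
    using principal_annihilator_idealsD[OF pai scalar_ideal_coordinate[OF M, of a]] by blast
  have "g \<in> (\<lambda>m. m a) ` M"
    unfolding L using rangeI[of "(*) g" 1] by simp
  then obtain mg where mg: "mg \<in> M" "mg a = g"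
    by blast
  have "dot_on I f mg \<in> (\<lambda>m. m a) ` M"
  proof (rule double_ann[rule_format])
    fix c assume "c * g = 0"
    then have "dot_on I f (vscale c mg) = 0"
      using kernel submodD(3)[OF M mg(1)] mg(2) by (simp add: vscale_def)
    then show "c * dot_on I f mg = 0"
      by (simp add: dot_on_vscale)
  qed
  then obtain s where s: "dot_on I f mg = g * s"
    unfolding L by blast
  have "dot_on I f m = s * m a" if "m \<in> M" for m
  proof -
    have "m a \<in> range ((*) g)"
      using L \<open>m \<in> M\<close> by blast
    then obtain q where q: "m a = g * q"
      by blast
    define m' where "m' = vadd m (vscale (- q) mg)"
    have "m' \<in> M"
      unfolding m'_def using \<open>m \<in> M\<close> mg(1) by (intro submodD(2,3)[OF M])
    moreover have "m' a = 0"
      using q mg(2) by (simp add: m'_def vadd_def vscale_def algebra_simps)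
    ultimately have "dot_on I f m' = 0"
      by (rule kernel)
    then have "dot_on I f m - q * dot_on I f mg = 0"
      by (simp add: m'_def dot_on_vadd dot_on_vscale)
    then show ?thesis
      using s q by (simp add: algebra_simps)
  qed
  then show ?thesis
    by blast
qed

lemma submod_double_annihilator_on:
  assumes pai: "principal_annihilator_ideals TYPE('k::comm_ring_1)" and "finite I"
    and "submod (M :: ('m, 'k) vec set)"
    and "\<And>f. \<forall>m\<in>M. dot_on I f m = 0 \<Longrightarrow> dot_on I f x = 0"
  shows "\<exists>m\<in>M. \<forall>j\<in>I. m j = x j"
  using assms(2-)
proof (induction I arbitrary: M x rule: finite_induct)
  case empty
  then show ?case
    using submodD(1) by blast
next
  case (insert a I M x)
  note M = \<open>submod M\<close> and ann = insert.prems(2)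
  have "x a \<in> (\<lambda>m. m a) ` M"
    using coordinate_attained[OF pai M] ann insert.hyps(1) by blast
  then obtain m0 where m0: "m0 \<in> M" "m0 a = x a"
    by force
  define z where "z = vadd x (vscale (-1) m0)"
  have "dot_on I f z = 0" if f: "\<forall>m\<in>{m \<in> M. m a = 0}. dot_on I f m = 0" for f
  proof -
    obtain c where c: "\<forall>m\<in>M. dot_on I f m = c * m a"
      using dot_on_factors_through_coordinate[OF pai M] f by blast
    have "\<forall>m\<in>M. dot_on (insert a I) (f(a := - c)) m = 0"
      using c by (simp add: dot_on_insert_fun_upd[OF insert.hyps])
    then have "dot_on (insert a I) (f(a := - c)) x = 0"
      by (rule ann)
    then show ?thesis
      using c m0 by (simp add: z_def dot_on_vadd dot_on_vscale dot_on_insert_fun_upd[OF insert.hyps])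
  qed
  then obtain m1 where m1: "m1 \<in> M" "m1 a = 0" "\<forall>j\<in>I. m1 j = z j"
    using insert.IH[OF submod_coordinate_kernel[OF M]] by blast
  show ?case
  proof (intro bexI ballI)
    show "vadd m0 m1 \<in> M"
      using M m0(1) m1(1) by (rule submodD)
    show "vadd m0 m1 j = x j" if "j \<in> insert a I" for j
      using that m0(2) m1 by (auto simp: z_def vadd_def vscale_def)
  qed
qed

lemma dotp_comm: "dotp f x = dotp x f"
  unfolding dotp_def by (simp add: mult.commute)

lemma dotp_vadd: "dotp f (vadd x y) = dotp f x + dotp f y"
  unfolding dotp_def vadd_def by (simp add: distrib_left sum.distrib)

lemma dotp_vadd_left: "dotp (vadd f g) x = dotp f x + dotp g x"
  unfolding dotp_def vadd_def by (simp add: distrib_right sum.distrib)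

lemma dotp_vscale: "dotp f (vscale c x) = c * dotp f x"
  unfolding dotp_def vscale_def by (simp add: sum_distrib_left algebra_simps)

lemma dotp_vzero: "dotp f vzero = 0"
  unfolding dotp_def vzero_def by simp

lemma UNIV_quad: "(UNIV :: quad set) = {Q, P}"
  using quad.exhaust by auto

lemma finite_mode_quad: "finite (UNIV :: ('m::finite \<times> quad) set)"
  by (simp add: UNIV_Times_UNIV[symmetric] UNIV_quad del: UNIV_Times_UNIV)

lemma perp_perp:
  assumes pai: "principal_annihilator_ideals TYPE('k::comm_ring_1)"
    and M: "submod (M :: ('m::finite, 'k) vec set)"
  shows "perp (perp M) = M"
proof
  show "M \<subseteq> perp (perp M)"
    unfolding perp_def by (auto simp: dotp_comm)
  show "perp (perp M) \<subseteq> M"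
  proof
    fix x assume x: "x \<in> perp (perp M)"
    have "dot_on UNIV f x = 0" if "\<forall>m\<in>M. dot_on UNIV f m = 0" for f
    proof -
      have "f \<in> perp M"
        using that unfolding perp_def dot_on_def dotp_def by (simp add: mult.commute)
      then show ?thesis
        using x unfolding perp_def dot_on_def dotp_def by simp
    qed
    then obtain m where "m \<in> M" "\<forall>j. m j = x j"
      using submod_double_annihilator_on[OF pai finite_mode_quad M] by blast
    then show "x \<in> M"
      by (metis ext)
  qed
qed

lemma submod_image:
  assumes X: "submod X"
    and add: "\<And>x y. F (vadd x y) = vadd (F x) (F y)" and scale: "\<And>c x. F (vscale c x) = vscale c (F x)"
  shows "submod (F ` X)"
  unfolding submod_def
proof (intro conjI ballI allI)
  have "F vzero = vzero"
    using scale[of 0 vzero] by (simp add: vscale_def vzero_def)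
  then show "vzero \<in> F ` X"
    using submodD(1)[OF X] by force
  show "vadd x y \<in> F ` X" if xy: "x \<in> F ` X" "y \<in> F ` X" for x y
  proof -
    obtain a b where ab: "a \<in> X" "b \<in> X" and "x = F a" "y = F b"
      using xy by blast
    then have "vadd x y = F (vadd a b)"
      by (simp add: add)
    then show ?thesis
      using submodD(2)[OF X ab] by (rule image_eqI)
  qed
  show "vscale c x \<in> F ` X" if x: "x \<in> F ` X" for c x
  proof -
    obtain a where a: "a \<in> X" and "x = F a"
      using x by blast
    then have "vscale c x = F (vscale c a)"
      by (simp add: scale)
    then show ?thesis
      using submodD(3)[OF X a] by (rule image_eqI)
  qed
qed

lemma submod_perp: "submod (perp X)"
  unfolding submod_def perp_def by (simp add: dotp_vadd dotp_vscale dotp_vzero)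

lemma submod_sumsp:
  assumes A: "submod A" and B: "submod B"
  shows "submod (sumsp A B)"
  unfolding submod_def
proof (intro conjI ballI allI)
  show "vzero \<in> sumsp A B"
    using submodD(1)[OF A] submodD(1)[OF B] unfolding sumsp_def
    by (force simp: vadd_def vzero_def)
  show "vadd x y \<in> sumsp A B" if xy: "x \<in> sumsp A B" "y \<in> sumsp A B" for x y
  proof -
    obtain a b a' b' where "a \<in> A" "b \<in> B" "x = vadd a b" "a' \<in> A" "b' \<in> B" "y = vadd a' b'"
      using xy unfolding sumsp_def by blast
    moreover have "vadd (vadd a b) (vadd a' b') = vadd (vadd a a') (vadd b b')"
      by (simp add: vadd_def fun_eq_iff algebra_simps)
    moreover have "vadd a a' \<in> A" "vadd b b' \<in> B"
      using calculation submodD(2)[OF A] submodD(2)[OF B] by blast+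
    ultimately show ?thesis
      unfolding sumsp_def by blast
  qed
  show "vscale c x \<in> sumsp A B" if x: "x \<in> sumsp A B" for c x
  proof -
    obtain a b where "a \<in> A" "b \<in> B" "x = vadd a b"
      using x unfolding sumsp_def by blast
    moreover have "vscale c (vadd a b) = vadd (vscale c a) (vscale c b)"
      by (simp add: vadd_def vscale_def fun_eq_iff algebra_simps)
    moreover have "vscale c a \<in> A" "vscale c b \<in> B"
      using calculation submodD(3)[OF A] submodD(3)[OF B] by blast+
    ultimately show ?thesis
      unfolding sumsp_def by blast
  qed
qed

lemma perp_antimono: "A \<subseteq> B \<Longrightarrow> perp B \<subseteq> perp A"
  unfolding perp_def by blast

lemma subset_sumsp:
  assumes "vzero \<in> A" "vzero \<in> B"
  shows "A \<subseteq> sumsp A B" and "B \<subseteq> sumsp A B"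
proof -
  have "a = vadd a vzero" "a = vadd vzero a" for a :: "('m, 'k::comm_ring_1) vec"
    by (simp_all add: vadd_def vzero_def)
  then show "A \<subseteq> sumsp A B" "B \<subseteq> sumsp A B"
    unfolding sumsp_def using assms by blast+
qed

lemma perp_sumsp:
  assumes "vzero \<in> A" "vzero \<in> B"
  shows "perp (sumsp A B) = perp A \<inter> perp B"
proof
  show "perp (sumsp A B) \<subseteq> perp A \<inter> perp B"
    using perp_antimono[OF subset_sumsp(1)[OF assms]] perp_antimono[OF subset_sumsp(2)[OF assms]]
    by blast
  show "perp A \<inter> perp B \<subseteq> perp (sumsp A B)"
    unfolding perp_def sumsp_def by (auto simp: dotp_vadd_left)
qed

section \<open>The symplectic dual of a measurement\<close>

definition bracket_vec :: "('m, 'k::comm_ring_1) vec \<Rightarrow> ('m, 'k) vec" where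
  "bracket_vec h = (\<lambda>(i, q). if q = Q then h (i, P) else - h (i, Q))"

lemma sum_mode_quad:
  fixes F :: "'m::finite \<times> quad \<Rightarrow> 'k::comm_ring_1"
  shows "(\<Sum>j\<in>UNIV. F j) = (\<Sum>i\<in>UNIV. F (i, Q) + F (i, P))"
proof -
  have "(\<Sum>j\<in>UNIV. F j) = (\<Sum>i\<in>UNIV. \<Sum>q\<in>UNIV. F (i, q))"
    by (simp add: UNIV_Times_UNIV[symmetric] sum.cartesian_product del: UNIV_Times_UNIV)
  then show ?thesis
    by (simp add: UNIV_quad)
qed

lemma dotp_bracket_vec: "dotp f (bracket_vec h) = pbracket f h"
  unfolding dotp_def pbracket_def bracket_vec_def sum_mode_quad by simp

lemma submod_bracket_vec_image: "submod X \<Longrightarrow> submod (bracket_vec ` X)"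
  by (rule submod_image) (auto simp: bracket_vec_def vadd_def vscale_def)

lemma perp_bracket_vec_image: "perp (bracket_vec ` X) = {f. \<forall>h\<in>X. pbracket f h = 0}"
  unfolding perp_def by (simp add: dotp_comm[of "bracket_vec _"] dotp_bracket_vec)

lemma perp_V_commute:
  assumes pai: "principal_annihilator_ideals TYPE('k::comm_ring_1)"
    and V: "submod (V :: ('m::finite, 'k) vec set)" and X: "submod X"
  shows "perp (V_commute V X) = sumsp (perp V) (bracket_vec ` X)"
proof -
  let ?S = "sumsp (perp V) (bracket_vec ` X)"
  have "perp ?S = perp (perp V) \<inter> perp (bracket_vec ` X)"
    using submodD(1)[OF submod_perp] submodD(1)[OF submod_bracket_vec_image[OF X]]
    by (rule perp_sumsp)
  also have "\<dots> = V_commute V X"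
    unfolding perp_perp[OF pai V] perp_bracket_vec_image V_commute_def by blast
  finally show ?thesis
    using perp_perp[OF pai submod_sumsp[OF submod_perp submod_bracket_vec_image[OF X]], of V]
    by simp
qed

section \<open>Epistemic states and measurements\<close>

lemma aff_iff: "x \<in> aff X u \<longleftrightarrow> (\<forall>f\<in>X. dotp f x = dotp f u)"
proof
  assume "x \<in> aff X u"
  then show "\<forall>f\<in>X. dotp f x = dotp f u"
    unfolding aff_def perp_def by (auto simp: dotp_vadd)
next
  assume x: "\<forall>f\<in>X. dotp f x = dotp f u"
  have "vadd x (vscale (-1) u) \<in> perp X"
    using x unfolding perp_def by (simp add: dotp_vadd dotp_vscale)
  moreover have "x = vadd (vadd x (vscale (-1) u)) u"
    by (simp add: vadd_def vscale_def)
  ultimately show "x \<in> aff X u"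
    unfolding aff_def by blast
qed

lemma aff_antimono: "X \<subseteq> Y \<Longrightarrow> x \<in> aff Y u \<Longrightarrow> x \<in> aff X u"
  by (auto simp: aff_iff)

lemma aff_trans: "x \<in> aff X u \<Longrightarrow> u \<in> aff X u' \<Longrightarrow> x \<in> aff X u'"
  by (simp add: aff_iff)

lemma V_commute_subset: "V_commute V X \<subseteq> V"
  unfolding V_commute_def by blast

lemma infers_pointwise:
  assumes "infers V v X xo Y yo" and "w \<in> aff X xo" and "w \<in> aff V v"
  shows "w \<in> aff Y yo"
proof -
  have "w \<in> upd_vals V v X xo"
    using assms(2) aff_antimono[OF V_commute_subset assms(3)] unfolding upd_vals_def by blast
  then have "aff (upd_space V X) w \<subseteq> aff Y yo"
    using assms(1) unfolding infers_def outcome_certain_def by blast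
  moreover have "w \<in> aff (upd_space V X) w"
    by (simp add: aff_iff)
  ultimately show ?thesis
    by blast
qed

lemma joint_possible_witness:
  assumes "joint_possible V v X xo Y yo" and "vzero \<in> X" and "vzero \<in> V"
  shows "\<exists>w. w \<in> aff X xo \<and> w \<in> aff (V_commute V X) v \<and> w \<in> aff Y yo"
proof -
  obtain v' w where v': "v' \<in> aff X xo" "v' \<in> aff (V_commute V X) v"
    and w: "w \<in> aff (upd_space V X) v'" "w \<in> aff Y yo"
    using assms(1) unfolding joint_possible_def outcome_possible_def upd_vals_def by blast
  have "vzero \<in> V_commute V X"
    using assms(3) unfolding V_commute_def pbracket_def vzero_def by simp
  then have "w \<in> aff X v'" "w \<in> aff (V_commute V X) v'"
    using aff_antimono[OF subset_sumsp(1)[OF assms(2)] w(1)[unfolded upd_space_def]]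
      aff_antimono[OF subset_sumsp(2)[OF assms(2)] w(1)[unfolded upd_space_def]]
    by auto
  then show ?thesis
    using v' w(2) aff_trans by blast
qed

lemma post_update_state_shift:
  assumes pai: "principal_annihilator_ideals TYPE('k::comm_ring_1)"
    and V: "submod (V :: ('m::finite, 'k) vec set)" and X: "valid_meas X"
    and x0: "x0 \<in> aff V v" "x0 \<in> aff X u"
    and y: "y \<in> aff X u" "y \<in> aff (V_commute V X) v"
  shows "\<exists>z h. z \<in> aff V v \<and> z \<in> aff X u \<and> h \<in> X \<and> y = vadd z (bracket_vec h)"
proof -
  have subX: "submod X" and isoX: "isotropic X"
    using X unfolding valid_meas_def by blast+
  define d where "d = vadd y (vscale (-1) x0)"
  have d: "dotp f d = dotp f y - dotp f x0" for f
    by (simp add: d_def dotp_vadd dotp_vscale)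
  have "dotp f d = 0" if "f \<in> V_commute V X" for f
  proof -
    have "f \<in> V"
      using that V_commute_subset by blast
    then show ?thesis
      using that x0(1) y(2) unfolding d aff_iff by simp
  qed
  then have "d \<in> perp (V_commute V X)"
    unfolding perp_def by blast
  then obtain p h where p: "p \<in> perp V" and h: "h \<in> X" and dph: "d = vadd p (bracket_vec h)"
    unfolding perp_V_commute[OF pai V subX] sumsp_def by blast
  define z where "z = vadd x0 p"
  have "z \<in> aff V v"
    using x0(1) p unfolding z_def aff_iff perp_def by (simp add: dotp_vadd)
  moreover have "z \<in> aff X u"
  proof -
    have "dotp f p = 0" if "f \<in> X" for f
    proof -
      have "dotp f d = 0"
        using that x0(2) y(1) unfolding d aff_iff by simp
      moreover have "pbracket f h = 0"
        using isoX that h unfolding isotropic_def by blast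
      ultimately show ?thesis
        unfolding dph by (simp add: dotp_vadd dotp_bracket_vec)
    qed
    then show ?thesis
      using x0(2) unfolding z_def aff_iff by (simp add: dotp_vadd)
  qed
  moreover have "y = vadd z (bracket_vec h)"
  proof -
    have "y = vadd x0 d"
      by (simp add: d_def vadd_def vscale_def)
    then show ?thesis
      unfolding dph z_def by (simp add: vadd_def add.assoc)
  qed
  ultimately show ?thesis
    using h by blast
qed

lemma pbracket_eq_0_if_disjoint_supports:
  assumes "supported_on sys S G" "supported_on sys T H" "S \<inter> T = {}" "g \<in> G" "h \<in> H"
  shows "pbracket g h = 0"
proof -
  have "g (i, q) * h (i, q') = 0" for i q q'
  proof (cases "sys i \<in> S")
    case True
    then have "sys i \<notin> T"
      using assms(3) by blast
    then show ?thesis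
      using assms(2,5) unfolding supported_on_def by auto
  next
    case False
    then show ?thesis
      using assms(1,4) unfolding supported_on_def by auto
  qed
  then show ?thesis
    unfolding pbracket_def by simp
qed

theorem theorem2:
  fixes sys :: "'m::finite \<Rightarrow> sysname"
    and V :: "('m, 'k::comm_ring_1) vec set" and v :: "('m, 'k) vec"
    and VA VB VU VW :: "('m, 'k) vec set"
    and a1 b1 uok ufail wok wfail :: "('m, 'k) vec"
  assumes "toy_scalars TYPE('k)"
    and "valid_state V v"
    and "valid_meas VA" and "supported_on sys {SysR} VA"
    and "valid_meas VB" and "supported_on sys {SysS} VB"
    and "valid_meas VU" and "supported_on sys {SysR, SysA} VU"
    and "valid_meas VW" and "supported_on sys {SysS, SysB} VW"
    and "vadd uok (vscale (-1) ufail) \<notin> perp VU"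
    and "vadd wok (vscale (-1) wfail) \<notin> perp VW"
  shows "\<not> FR_contradiction V v VA a1 VB b1 VU uok ufail VW wok wfail"
proof
  assume "FR_contradiction V v VA a1 VB b1 VU uok ufail VW wok wfail"
  then have joint: "joint_possible V v VU uok VW wok"
    and U_B: "infers V v VU uok VB b1" and B_A: "infers V v VB b1 VA a1"
    and A_W: "infers V v VA a1 VW wfail"
    unfolding FR_contradiction_def by blast+
  have pai: "principal_annihilator_ideals TYPE('k)"
    using assms(1) by (rule toy_scalars_principal_annihilator_ideals)
  have V: "submod V" and U: "submod VU"
    using assms(2,7) unfolding valid_state_def valid_meas_def by blast+
  obtain x0 where x0: "x0 \<in> aff V v" "x0 \<in> aff VU uok"
    using joint unfolding joint_possible_def outcome_possible_def by blast
  obtain y where y: "y \<in> aff VU uok" "y \<in> aff (V_commute V VU) v" "y \<in> aff VW wok"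
    using joint_possible_witness[OF joint submodD(1)[OF U] submodD(1)[OF V]] by blast
  obtain z h where z: "z \<in> aff V v" "z \<in> aff VU uok" and "h \<in> VU"
    and y_shift: "y = vadd z (bracket_vec h)"
    using post_update_state_shift[OF pai V assms(7) x0 y(1,2)] by blast
  have "z \<in> aff VW wfail"
    using z infers_pointwise[OF U_B] infers_pointwise[OF B_A] infers_pointwise[OF A_W] by blast
  moreover have "dotp g y = dotp g z" if "g \<in> VW" for g
    using pbracket_eq_0_if_disjoint_supports[OF assms(10,8) _ that \<open>h \<in> VU\<close>]
    unfolding y_shift by (simp add: dotp_vadd dotp_bracket_vec)
  ultimately have "vadd wok (vscale (-1) wfail) \<in> perp VW"
    using y(3) unfolding perp_def aff_iff by (simp add: dotp_vadd dotp_vscale)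
  with assms(12) show False
    by contradiction
qed

end
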